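(* Let $\beta>\alpha>0$ and let $q=(q_1,q_2,q_3,q_4)$ be a convex non-collinear central configuration of the planar Newtonian 4-body problem with masses $m_1=m_2=\beta$, $m_3=m_4=\alpha$, with $q_1,q_2,q_3,q_4$ in cyclic order around the convex quadrilateral. If $r_{13}=r_{24}$, then $\Delta_4=-\Delta_3$.
   Context: Bodies have positions $q_i\in\mathbb{R}^2$ and masses $m_i>0$; $r_{ij}=\|q_i-q_j\|$; $U(q)=\sum_{i<j}m_im_j/r_{ij}$. A configuration with distinct points and $\sum_i m_iq_i=0$ is a central configuration if $\sum_{j\neq i} m_j\frac{q_j-q_i}{r_{ij}^3}=\lambda q_i$ for all $i$ and some constant $\lambda$. "Convex non-collinear": the four points are vertices of a strictly convex quadrilateral. For $1\le i\le 4$, $|\Delta_i|$ denotes the area of the triangle formed by the three points $q_j$, $j\neq i$, and the oriented areas are $\Delta_1=-|\Delta_1|$, $\Delta_2=|\Delta_2|$, $\Delta_3=-|\Delta_3|$, $\Delta_4=|\Delta_4|$; they satisfy $\Delta_1+\Delta_2+\Delta_3+\Delta_4=0$. *)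

theory Defs
  imports "HOL-Analysis.Analysis"
begin

definition cross2 :: "real^2 \<Rightarrow> real^2 \<Rightarrow> real" where
  "cross2 u v = u$1 * v$2 - u$2 * v$1"

definition orient :: "real^2 \<Rightarrow> real^2 \<Rightarrow> real^2 \<Rightarrow> real" where
  "orient a b c = cross2 (b - a) (c - a)"

definition tri_area :: "real^2 \<Rightarrow> real^2 \<Rightarrow> real^2 \<Rightarrow> real" where
  "tri_area a b c = \<bar>orient a b c\<bar> / 2"

definition central_configuration :: "(nat \<Rightarrow> real) \<Rightarrow> (nat \<Rightarrow> real^2) \<Rightarrow> bool" where
  "central_configuration m q \<longleftrightarrow>
     (\<forall>i\<in>{1..4}. \<forall>j\<in>{1..4}. i \<noteq> j \<longrightarrow> q i \<noteq> q j) \<and>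
     (\<Sum>i\<in>{1..4}. m i *\<^sub>R q i) = 0 \<and>
     (\<exists>lam::real. \<forall>i\<in>{1..4}.
        (\<Sum>j\<in>{1..4} - {i}. (m j / dist (q i) (q j) ^ 3) *\<^sub>R (q j - q i)) = lam *\<^sub>R q i)"

definition nxt :: "nat \<Rightarrow> nat" where
  "nxt i = (if i = 4 then 1 else i + 1)"

text \<open>q 1, q 2, q 3, q 4 are, in this cyclic order, the vertices of a strictly convex
  quadrilateral: for every edge (q i, q (nxt i)) the two remaining vertices lie strictly
  on the same side of the line through that edge.\<close>
definition convex_cyclic :: "(nat \<Rightarrow> real^2) \<Rightarrow> bool" where
  "convex_cyclic q \<longleftrightarrow>
     (\<forall>i\<in>{1..4}. \<forall>k\<in>{1..4}. \<forall>l\<in>{1..4}.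
        k \<notin> {i, nxt i} \<and> l \<notin> {i, nxt i} \<longrightarrow>
        orient (q i) (q (nxt i)) (q k) * orient (q i) (q (nxt i)) (q l) > 0)"

definition abs_Delta :: "(nat \<Rightarrow> real^2) \<Rightarrow> nat \<Rightarrow> real" where
  "abs_Delta q i =
     (if i = 1 then tri_area (q 2) (q 3) (q 4)
      else if i = 2 then tri_area (q 1) (q 3) (q 4)
      else if i = 3 then tri_area (q 1) (q 2) (q 4)
      else tri_area (q 1) (q 2) (q 3))"

definition Delta :: "(nat \<Rightarrow> real^2) \<Rightarrow> nat \<Rightarrow> real" where
  "Delta q i = (-1) ^ i * abs_Delta q i"

end

theory Submission
  imports Defs
begin

text \<open>With Dziobek's quantities \<open>S\<^sub>i\<^sub>j = r\<^sub>i\<^sub>j\<^sup>-\<^sup>3 + \<lambda>/M\<close> the equation of body \<open>i\<close>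
  says \<open>\<Sum>\<^sub>j m\<^sub>j S\<^sub>i\<^sub>j (q\<^sub>j - q\<^sub>i) = 0\<close>; crossing it with one relative position gives linear
  relations between the \<open>S\<^sub>i\<^sub>j\<close> and the oriented areas \<open>T\<^sub>i\<close> of the triangles without
  \<open>q\<^sub>i\<close>. Equal diagonals mean \<open>S\<^sub>1\<^sub>3 = S\<^sub>2\<^sub>4\<close>, and two relations then give
  \<open>T\<^sub>2 T\<^sub>4 = T\<^sub>1 T\<^sub>3\<close>; with \<open>T\<^sub>1 - T\<^sub>2 + T\<^sub>3 - T\<^sub>4 = 0\<close> this forces a pair of
  opposite sides to be parallel. If \<open>q\<^sub>2q\<^sub>3 \<parallel> q\<^sub>1q\<^sub>4\<close>, the equal diagonals make the
  trapezoid isosceles, so \<open>S\<^sub>1\<^sub>2 = S\<^sub>3\<^sub>4\<close>, and two more relations yield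
  \<open>(\<beta>\<^sup>2 - \<alpha>\<^sup>2) S\<^sub>1\<^sub>3 = 0\<close>. But \<open>S\<^sub>1\<^sub>3 \<noteq> 0\<close>: otherwise \<open>q\<^sub>3\<close> and \<open>q\<^sub>4\<close> would have
  equal distances to \<open>q\<^sub>1\<close> and to \<open>q\<^sub>2\<close> and lie on the same side of \<open>q\<^sub>1q\<^sub>2\<close>.
  Hence \<open>q\<^sub>1q\<^sub>2 \<parallel> q\<^sub>3q\<^sub>4\<close>, i.e. \<open>T\<^sub>3 = T\<^sub>4\<close>.\<close>

lemma dist_sq_components: "dist (a::real^2) b ^ 2 = (a$1 - b$1)^2 + (a$2 - b$2)^2"
  by (simp add: dist_norm norm_eq_sqrt_inner inner_vec_def sum_2 power2_eq_square)

lemma orient_swap: "orient a c b = - orient a b c"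
  by (simp add: orient_def cross2_def algebra_simps)

lemma orient_rotate: "orient b c a = orient a b c"
  by (simp add: orient_def cross2_def algebra_simps)

lemma orient_alternating_sum: "orient b c d - orient a c d + orient a b d - orient a b c = 0"
  by (simp add: orient_def cross2_def algebra_simps)

lemma orient_relation_of_vanishing_sum:
  fixes p :: "real^2"
  assumes "distinct [j, k, l]" and "(\<Sum>n\<in>{j, k, l}. c n *\<^sub>R (q n - p)) = 0"
  shows "c j * orient p (q j) (q l) + c k * orient p (q k) (q l) = 0"
proof -
  let ?u = "q j - p" and ?v = "q k - p" and ?w = "q l - p"
  have sum: "c j *\<^sub>R ?u + c k *\<^sub>R ?v + c l *\<^sub>R ?w = 0"
    using assms by (simp add: add.assoc)
  have "c j * orient p (q j) (q l) + c k * orient p (q k) (q l)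
      = (c j *\<^sub>R ?u + c k *\<^sub>R ?v + c l *\<^sub>R ?w)$1 * ?w$2
      - (c j *\<^sub>R ?u + c k *\<^sub>R ?v + c l *\<^sub>R ?w)$2 * ?w$1"
    by (simp add: orient_def cross2_def algebra_simps)
  then show ?thesis using sum by simp
qed

lemma same_side_equidistant_eq:
  fixes p p' a b :: "real^2"
  assumes "dist p a = dist p b" and "dist p' a = dist p' b"
    and "orient p p' a * orient p p' b > 0"
  shows "a = b"
proof -
  define u1 u2 x1 x2 y1 y2 where coords: "u1 = p'$1 - p$1" "u2 = p'$2 - p$2"
    "x1 = a$1 - p$1" "x2 = a$2 - p$2" "y1 = b$1 - p$1" "y2 = b$2 - p$2"
  have norm_eq: "x1^2 + x2^2 = y1^2 + y2^2"
    using arg_cong[OF assms(1), of "\<lambda>r. r^2"]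
    by (simp add: dist_sq_components coords power2_commute)
  have "(x1 - u1)^2 + (x2 - u2)^2 = (y1 - u1)^2 + (y2 - u2)^2"
    using arg_cong[OF assms(2), of "\<lambda>r. r^2"]
    by (simp add: dist_sq_components coords power2_commute)
  then have inner_eq: "u1*x1 + u2*x2 = u1*y1 + u2*y2"
    using norm_eq by (simp add: power2_eq_square algebra_simps)
  define cx cy where cross: "cx = u1*x2 - u2*x1" "cy = u1*y2 - u2*y1"
  have pos: "cx * cy > 0"
    using assms(3) by (simp add: cross coords orient_def cross2_def)
  \<comment> \<open>Lagrange's identity fixes the cross products up to sign; the side condition fixes the sign.\<close>
  have "cx^2 = cy^2"
  proof -
    have "cx^2 = (u1^2 + u2^2)*(x1^2 + x2^2) - (u1*x1 + u2*x2)^2" unfolding cross by algebra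
    also have "\<dots> = (u1^2 + u2^2)*(y1^2 + y2^2) - (u1*y1 + u2*y2)^2" using norm_eq inner_eq by simp
    also have "\<dots> = cy^2" unfolding cross by algebra
    finally show ?thesis .
  qed
  with pos have "cx = cy"
    by (auto simp: power2_eq_iff)
  then have "(u1^2 + u2^2) * ((x1 - y1)^2 + (x2 - y2)^2) = 0"
    using inner_eq unfolding cross by algebra
  moreover have "u1^2 + u2^2 \<noteq> 0"
    using pos by (auto simp: cross)
  ultimately have "x1 = y1 \<and> x2 = y2"
    by (auto simp: add_nonneg_eq_0_iff)
  then show ?thesis
    by (simp add: vec_eq_iff forall_2 coords)
qed

lemma isosceles_trapezoid:
  fixes a b c d :: "real^2"
  assumes "cross2 (c - b) (d - a) = 0" and "dist a c = dist b d"
    and "orient a b c * orient a b d > 0"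
  shows "dist a b = dist c d"
proof -
  define w1 w2 u1 u2 d1 d2 where coords: "w1 = a$1 - b$1" "w2 = a$2 - b$2"
    "u1 = c$1 - b$1" "u2 = c$2 - b$2" "d1 = d$1 - a$1" "d2 = d$2 - a$2"
  \<comment> \<open>\<open>e = u + d\<close> and \<open>f = d - u\<close> are parallel, so the equal diagonals give \<open>|w + f| = |w|\<close>
    unless \<open>e = 0\<close>, which would put \<open>c\<close> and \<open>d\<close> on opposite sides of \<open>ab\<close>.\<close>
  define e1 e2 f1 f2 where ef: "e1 = u1 + d1" "e2 = u2 + d2" "f1 = d1 - u1" "f2 = d2 - u2"
  have "u1*d2 - u2*d1 = 0"
    using assms(1) by (simp add: cross2_def coords)
  then have parallel: "e1*f2 - e2*f1 = 0"
    unfolding ef by algebra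
  have "(u1 - w1)^2 + (u2 - w2)^2 = (w1 + d1)^2 + (w2 + d2)^2"
    using arg_cong[OF assms(2), of "\<lambda>r. r^2"]
    by (simp add: dist_sq_components coords power2_commute algebra_simps)
  then have diagonals: "-(e1*f1 + e2*f2) = 2*(w1*e1 + w2*e2)"
    unfolding ef by algebra
  have "(e1^2 + e2^2) * ((f1^2 + f2^2) + 2*(w1*f1 + w2*f2))
      = (e1*f1 + e2*f2) * ((e1*f1 + e2*f2) + 2*(w1*e1 + w2*e2))"
    using parallel by algebra
  then have "(e1^2 + e2^2) * ((f1^2 + f2^2) + 2*(w1*f1 + w2*f2)) = 0"
    using diagonals by simp
  moreover have "e1^2 + e2^2 \<noteq> 0"
  proof
    assume "e1^2 + e2^2 = 0"
    then have "d1 = - u1" "d2 = - u2"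
      by (auto simp: ef add_nonneg_eq_0_iff)
    have "orient a b c = w2*u1 - w1*u2" "orient a b d = w2*d1 - w1*d2"
      by (simp_all add: orient_def cross2_def coords algebra_simps)
    then have "orient a b c * orient a b d = (w2*u1 - w1*u2) * (w2*d1 - w1*d2)"
      by simp
    also have "\<dots> = -((w1*u2 - w2*u1)^2)"
      using \<open>d1 = - u1\<close> \<open>d2 = - u2\<close> by (simp add: power2_eq_square algebra_simps)
    finally have "orient a b c * orient a b d = -((w1*u2 - w2*u1)^2)" .
    with assms(3) show False
      by (simp add: not_less)
  qed
  ultimately have "(f1^2 + f2^2) + 2*(w1*f1 + w2*f2) = 0"
    by auto
  then have "w1^2 + w2^2 = (w1 + f1)^2 + (w2 + f2)^2"
    by algebra
  then have "dist a b ^ 2 = dist c d ^ 2"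
    by (simp add: dist_sq_components coords ef power2_commute algebra_simps)
  then show ?thesis
    by simp
qed

lemma cc_equation_recentred:
  fixes q :: "'i \<Rightarrow> 'a::real_vector"
  assumes "finite I" and "i \<in> I" and "sum m I \<noteq> 0"
    and com: "(\<Sum>j\<in>I. m j *\<^sub>R q j) = 0"
    and eq: "(\<Sum>j\<in>I - {i}. (m j / r j) *\<^sub>R (q j - q i)) = lam *\<^sub>R q i"
  shows "(\<Sum>j\<in>I - {i}. (m j * (1 / r j + lam / sum m I)) *\<^sub>R (q j - q i)) = 0"
proof -
  let ?c = "lam / sum m I"
  have "(\<Sum>j\<in>I - {i}. (m j * ?c) *\<^sub>R (q j - q i)) = (\<Sum>j\<in>I. (m j * ?c) *\<^sub>R (q j - q i))"
    using sum.remove[OF assms(1,2), of "\<lambda>j. (m j * ?c) *\<^sub>R (q j - q i)"] by simp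
  also have "\<dots> = ?c *\<^sub>R (\<Sum>j\<in>I. m j *\<^sub>R q j) - (?c * sum m I) *\<^sub>R q i"
    by (simp add: scaleR_diff_right scaleR_sum_right sum_subtractf mult.commute
        flip: scaleR_sum_left sum_divide_distrib sum_distrib_left)
  also have "\<dots> = - lam *\<^sub>R q i"
    using com assms(3) by simp
  finally have "(\<Sum>j\<in>I - {i}. (m j * ?c) *\<^sub>R (q j - q i)) = - lam *\<^sub>R q i" .
  with eq show ?thesis
    by (simp add: distrib_left scaleR_add_left sum.distrib)
qed

text \<open>Dziobek's \<open>S\<^sub>i\<^sub>j\<close>, with \<open>L = \<lambda>/M\<close> for the total mass \<open>M\<close>.\<close>
definition cc_weight :: "real \<Rightarrow> ('i \<Rightarrow> 'a::metric_space) \<Rightarrow> 'i \<Rightarrow> 'i \<Rightarrow> real" where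
  "cc_weight L q i j = 1 / dist (q i) (q j) ^ 3 + L"

lemma cc_weight_commute: "cc_weight L q i j = cc_weight L q j i"
  by (simp add: cc_weight_def dist_commute)

lemma cc_weight_eq_iff:
  assumes "q i \<noteq> q j" and "q k \<noteq> q l"
  shows "cc_weight L q i j = cc_weight L q k l \<longleftrightarrow> dist (q i) (q j) = dist (q k) (q l)"
proof
  assume "cc_weight L q i j = cc_weight L q k l"
  then have "dist (q i) (q j) ^ 3 = dist (q k) (q l) ^ 3"
    using assms by (simp add: cc_weight_def field_simps)
  then show "dist (q i) (q j) = dist (q k) (q l)"
    by (rule power_eq_imp_eq_base) simp_all
qed (simp add: cc_weight_def)

lemma central_configuration_balanced:
  assumes "central_configuration m q" and "sum m {1..4} \<noteq> 0"
  obtains L where "\<And>i. i \<in> {1..4} \<Longrightarrow>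
    (\<Sum>j\<in>{1..4} - {i}. (m j * cc_weight L q i j) *\<^sub>R (q j - q i)) = 0"
proof -
  obtain lam where com: "(\<Sum>j\<in>{1..4}. m j *\<^sub>R q j) = 0" and
    eq: "\<And>i. i \<in> {1..4} \<Longrightarrow>
      (\<Sum>j\<in>{1..4} - {i}. (m j / dist (q i) (q j) ^ 3) *\<^sub>R (q j - q i)) = lam *\<^sub>R q i"
    using assms(1) unfolding central_configuration_def by blast
  show thesis
    using cc_equation_recentred[OF _ _ assms(2) com eq]
    by (intro that[of "lam / sum m {1..4}"]) (simp add: cc_weight_def)
qed

locale equal_diagonal_cc =
  fixes \<alpha> \<beta> L :: real and m :: "nat \<Rightarrow> real" and q :: "nat \<Rightarrow> real^2"
  assumes masses: "0 < \<alpha>" "\<alpha> < \<beta>" "m 1 = \<beta>" "m 2 = \<beta>" "m 3 = \<alpha>" "m 4 = \<alpha>"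
    and distinct: "\<And>i j. \<lbrakk>i \<in> {1..4}; j \<in> {1..4}; i \<noteq> j\<rbrakk> \<Longrightarrow> q i \<noteq> q j"
    and convex: "convex_cyclic q"
    and equal_diagonals: "dist (q 1) (q 3) = dist (q 2) (q 4)"
    and balanced: "\<And>i. i \<in> {1..4} \<Longrightarrow>
      (\<Sum>j\<in>{1..4} - {i}. (m j * cc_weight L q i j) *\<^sub>R (q j - q i)) = 0"
begin

abbreviation S :: "nat \<Rightarrow> nat \<Rightarrow> real" where
  "S \<equiv> cc_weight L q"

abbreviation "T1 \<equiv> orient (q 2) (q 3) (q 4)"
abbreviation "T2 \<equiv> orient (q 1) (q 3) (q 4)"
abbreviation "T3 \<equiv> orient (q 1) (q 2) (q 4)"
abbreviation "T4 \<equiv> orient (q 1) (q 2) (q 3)"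

lemma orient_products_pos: "T3 * T4 > 0" "T4 * T1 > 0" "T2 * T1 > 0"
proof -
  have edge: "orient (q i) (q (nxt i)) (q k) * orient (q i) (q (nxt i)) (q l) > 0"
    if "i \<in> {1..4}" "k \<in> {1..4}" "l \<in> {1..4}" "k \<notin> {i, nxt i}" "l \<notin> {i, nxt i}"
    for i k l
    using convex that unfolding convex_cyclic_def by blast
  have nxt: "nxt 1 = 2" "nxt 2 = 3" "nxt 3 = 4"
    by (simp_all add: nxt_def)
  show "T3 * T4 > 0"
    using edge[of 1 4 3, unfolded nxt] by simp
  show "T4 * T1 > 0"
    using edge[of 2 1 4, unfolded nxt orient_rotate[of "q 2" "q 3" "q 1"]] by simp
  show "T2 * T1 > 0"
    using edge[of 3 1 2, unfolded nxt orient_rotate[of "q 3" "q 4" "q 1"]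
        orient_rotate[of "q 3" "q 4" "q 2"]] by simp
qed

lemma areas_nonzero: "T1 \<noteq> 0" "T2 \<noteq> 0" "T3 \<noteq> 0" "T4 \<noteq> 0"
  using orient_products_pos by auto

lemma weight_relation:
  assumes "i \<in> {1..4}" and "{1..4} - {i} = {j, k, l}" and "distinct [j, k, l]"
  shows "m j * S i j * orient (q i) (q j) (q l) + m k * S i k * orient (q i) (q k) (q l) = 0"
  using orient_relation_of_vanishing_sum[OF assms(3), of "\<lambda>n. m n * S i n" q "q i"]
    balanced[OF assms(1)] assms(2)
  by simp

lemma area_relations:
  "\<beta> * S 1 2 * T3 + \<alpha> * S 1 3 * T2 = 0"
  "S 1 3 * T4 + S 1 4 * T3 = 0"
  "\<beta> * S 1 2 * T4 + \<alpha> * S 2 4 * T1 = 0"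
  "\<beta> * S 1 2 * T3 = \<alpha> * S 2 3 * T1"
  "\<beta> * S 1 3 * T4 + \<alpha> * S 3 4 * T1 = 0"
proof -
  have minus: "{1..4::nat} - {1} = {2, 3, 4}" "{1..4::nat} - {2} = {1, 3, 4}"
    "{1..4::nat} - {3} = {1, 2, 4}"
    by auto
  have "m 2 * S 1 2 * T3 + m 3 * S 1 3 * T2 = 0"
    by (rule weight_relation) (auto simp: minus)
  then show "\<beta> * S 1 2 * T3 + \<alpha> * S 1 3 * T2 = 0"
    unfolding masses .
  have "m 3 * S 1 3 * orient (q 1) (q 3) (q 2) + m 4 * S 1 4 * orient (q 1) (q 4) (q 2) = 0"
    by (rule weight_relation) (auto simp: minus)
  then have "\<alpha> * (S 1 3 * T4 + S 1 4 * T3) = 0"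
    unfolding masses orient_swap[of "q 1" "q 3" "q 2"] orient_swap[of "q 1" "q 4" "q 2"]
    by (simp add: algebra_simps)
  then show "S 1 3 * T4 + S 1 4 * T3 = 0"
    using masses(1) by simp
  have "m 1 * S 2 1 * orient (q 2) (q 1) (q 3) + m 4 * S 2 4 * orient (q 2) (q 4) (q 3) = 0"
    by (rule weight_relation) (auto simp: minus)
  then show "\<beta> * S 1 2 * T4 + \<alpha> * S 2 4 * T1 = 0"
    unfolding masses cc_weight_commute[of L q 2 1] orient_swap[of "q 2" "q 1" "q 3"]
      orient_rotate[of "q 2" "q 3" "q 1"] orient_swap[of "q 2" "q 4" "q 3"]
    by (simp add: algebra_simps)
  have "m 1 * S 2 1 * orient (q 2) (q 1) (q 4) + m 3 * S 2 3 * T1 = 0"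
    by (rule weight_relation) (auto simp: minus)
  then show "\<beta> * S 1 2 * T3 = \<alpha> * S 2 3 * T1"
    unfolding masses cc_weight_commute[of L q 2 1] orient_swap[of "q 2" "q 1" "q 4"]
      orient_rotate[of "q 2" "q 4" "q 1"]
    by (simp add: algebra_simps)
  have "m 1 * S 3 1 * orient (q 3) (q 1) (q 2) + m 4 * S 3 4 * orient (q 3) (q 4) (q 2) = 0"
    by (rule weight_relation) (auto simp: minus)
  then show "\<beta> * S 1 3 * T4 + \<alpha> * S 3 4 * T1 = 0"
    unfolding masses cc_weight_commute[of L q 3 1] orient_rotate[of "q 3" "q 1" "q 2"]
      orient_rotate[of "q 2" "q 3" "q 1"] orient_rotate[of "q 3" "q 4" "q 2"] .
qed

lemma areas_alternating_sum: "T1 - T2 + T3 - T4 = 0"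
  by (rule orient_alternating_sum)

lemma weight_eq_iff:
  assumes "i \<in> {1..4}" "j \<in> {1..4}" "i \<noteq> j" "k \<in> {1..4}" "l \<in> {1..4}" "k \<noteq> l"
  shows "S i j = S k l \<longleftrightarrow> dist (q i) (q j) = dist (q k) (q l)"
  using cc_weight_eq_iff distinct assms by metis

lemma weight_13_nonzero: "S 1 3 \<noteq> 0"
proof
  assume S13: "S 1 3 = 0"
  have "S 2 4 = 0"
    using S13 equal_diagonals weight_eq_iff[of 2 4 1 3] by simp
  have "S 1 4 = 0"
    using area_relations(2) S13 areas_nonzero(3) by simp
  have "S 1 2 = 0"
    using area_relations(1) S13 areas_nonzero(3) masses by simp
  then have "S 2 3 = 0"
    using area_relations(4) areas_nonzero(1) masses by simp
  have "dist (q 1) (q 3) = dist (q 1) (q 4)"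
    using S13 \<open>S 1 4 = 0\<close> weight_eq_iff[of 1 3 1 4] by simp
  moreover have "dist (q 2) (q 3) = dist (q 2) (q 4)"
    using \<open>S 2 3 = 0\<close> \<open>S 2 4 = 0\<close> weight_eq_iff[of 2 3 2 4] by simp
  moreover have "orient (q 1) (q 2) (q 3) * orient (q 1) (q 2) (q 4) > 0"
    using orient_products_pos(1) by (simp add: mult.commute)
  ultimately have "q 3 = q 4"
    by (rule same_side_equidistant_eq)
  then show False
    using distinct[of 3 4] by simp
qed

lemma areas_product: "T2 * T4 = T1 * T3"
proof -
  have "S 2 4 = S 1 3"
    using equal_diagonals weight_eq_iff[of 2 4 1 3] by simp
  then have "\<alpha> * S 1 3 * (T2 * T4 - T1 * T3)
      = T4 * (\<beta> * S 1 2 * T3 + \<alpha> * S 1 3 * T2) - T3 * (\<beta> * S 1 2 * T4 + \<alpha> * S 2 4 * T1)"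
    by (simp add: algebra_simps)
  also have "\<dots> = 0"
    using area_relations(1,3) by simp
  finally show ?thesis
    using weight_13_nonzero masses(1) by simp
qed

text \<open>\<open>T1 = T2\<close> means \<open>q 1 q 2 \<parallel> q 3 q 4\<close>, and \<open>T1 = T4\<close> means \<open>q 2 q 3 \<parallel> q 1 q 4\<close>.\<close>
lemma parallel_sides: "T3 = T4 \<or> T1 = T4"
proof -
  have "(T1 - T2) * (T1 - T4) = T1 * (T1 - T2 + T3 - T4) + (T2 * T4 - T1 * T3)"
    by (simp add: algebra_simps)
  then have "(T1 - T2) * (T1 - T4) = 0"
    using areas_alternating_sum areas_product by simp
  then show ?thesis
    using areas_alternating_sum by auto
qed

lemma not_parallel_23_14: "T1 \<noteq> T4"
proof
  assume "T1 = T4"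
  then have "T2 = T3"
    using areas_alternating_sum by simp
  have "cross2 (q 3 - q 2) (q 4 - q 1) = T1 - T4"
    by (simp add: orient_def cross2_def algebra_simps)
  then have "dist (q 1) (q 2) = dist (q 3) (q 4)"
    using isosceles_trapezoid[of "q 3" "q 2" "q 4" "q 1"] \<open>T1 = T4\<close> equal_diagonals
      orient_products_pos(1) by (simp add: mult.commute)
  then have "S 1 2 = S 3 4"
    using weight_eq_iff[of 1 2 3 4] by simp
  have "(\<beta> * S 1 2 + \<alpha> * S 1 3) * T3 = 0"
    using area_relations(1) \<open>T2 = T3\<close> by (simp add: algebra_simps)
  then have "\<beta> * S 1 2 + \<alpha> * S 1 3 = 0"
    using areas_nonzero(3) by simp
  have "(\<beta> * S 1 3 + \<alpha> * S 3 4) * T4 = 0"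
    using area_relations(5) \<open>T1 = T4\<close> by (simp add: algebra_simps)
  then have "\<beta> * S 1 3 + \<alpha> * S 3 4 = 0"
    using areas_nonzero(4) by simp
  have "(\<beta> * \<beta> - \<alpha> * \<alpha>) * S 1 3
      = \<beta> * (\<beta> * S 1 3 + \<alpha> * S 3 4) - \<alpha> * (\<beta> * S 1 2 + \<alpha> * S 1 3) + \<alpha> * \<beta> * (S 1 2 - S 3 4)"
    by (simp add: algebra_simps)
  also have "\<dots> = 0"
    using \<open>\<beta> * S 1 3 + \<alpha> * S 3 4 = 0\<close> \<open>\<beta> * S 1 2 + \<alpha> * S 1 3 = 0\<close> \<open>S 1 2 = S 3 4\<close> by simp
  finally show False
    using weight_13_nonzero masses(1,2) mult_strict_mono[of \<alpha> \<beta> \<alpha> \<beta>] by simp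
qed

lemma opposite_areas_eq: "T3 = T4"
  using parallel_sides not_parallel_23_14 by blast

end

theorem lemma3p3:
  fixes \<alpha> \<beta> :: real and m :: "nat \<Rightarrow> real" and q :: "nat \<Rightarrow> real^2"
  assumes "0 < \<alpha>" and "\<alpha> < \<beta>"
    and "m 1 = \<beta>" and "m 2 = \<beta>" and "m 3 = \<alpha>" and "m 4 = \<alpha>"
    and "central_configuration m q"
    and "convex_cyclic q"
    and "dist (q 1) (q 3) = dist (q 2) (q 4)"
  shows "Delta q 4 = - Delta q 3"
proof -
  have "{1..4::nat} = {1, 2, 3, 4}"
    by auto
  then have "sum m {1..4} \<noteq> 0"
    using assms(1-6) by simp
  then obtain L where "\<And>i. i \<in> {1..4} \<Longrightarrow>
      (\<Sum>j\<in>{1..4} - {i}. (m j * cc_weight L q i j) *\<^sub>R (q j - q i)) = 0"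
    using central_configuration_balanced[OF assms(7)] by blast
  then interpret equal_diagonal_cc \<alpha> \<beta> L m q
    using assms unfolding central_configuration_def by unfold_locales auto
  show ?thesis
    using opposite_areas_eq by (simp add: Delta_def abs_Delta_def tri_area_def)
qed

end
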